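(* Let $n\ge2$. Every continuous normalized Lie quasi-state $\zeta:\mathfrak{g}_n\to\mathbb{R}$ on the unitary motion algebra $\mathfrak{g}_n=\mathbb{C}^n\rtimes\mathfrak{u}(n)$ is identically zero. Consequently every continuous Lie quasi-state on $\mathfrak{g}_n$ has the form $\zeta(v,X)=\psi(v)+\eta(X)$ with $\psi$ a real-linear functional on $\mathbb{C}^n$ and $\eta$ a continuous Lie quasi-state on $\mathfrak{u}(n)$.
   Context: $\mathfrak{g}_n$ is the real Lie algebra $\mathbb{C}^n\times\mathfrak{u}(n)$ with bracket $[(v,X),(w,Y)]=(Xw-Yv,[X,Y])$. A Lie quasi-state is $\zeta$ with $\zeta(aA+bB)=a\zeta(A)+b\zeta(B)$ for all $a,b\in\mathbb{R}$ and commuting $A,B$; it is normalized if $\zeta(v,0)=\zeta(0,X)=0$ for all $v\in\mathbb{C}^n$, $X\in\mathfrak{u}(n)$. *)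

theory Defs
  imports "HOL-Analysis.Analysis"
begin

definition un :: "(complex^'n^'n) set" where
  "un = {X. \<forall>i j. X $ i $ j = - cnj (X $ j $ i)}"

definition gn :: "((complex^'n) \<times> (complex^'n^'n)) set" where
  "gn = UNIV \<times> un"

definition gbracket ::
  "((complex^'n) \<times> (complex^'n^'n)) \<Rightarrow> ((complex^'n) \<times> (complex^'n^'n))
     \<Rightarrow> ((complex^'n) \<times> (complex^'n^'n))" where
  "gbracket A B = (snd A *v fst B - snd B *v fst A, snd A ** snd B - snd B ** snd A)"

definition lie_quasi_state :: "'a set \<Rightarrow> ('a \<Rightarrow> 'a \<Rightarrow> 'a::real_vector) \<Rightarrow> ('a \<Rightarrow> real) \<Rightarrow> bool" where
  "lie_quasi_state L br \<zeta> \<longleftrightarrow>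
     (\<forall>A\<in>L. \<forall>B\<in>L. br A B = 0 \<longrightarrow>
        (\<forall>a b::real. \<zeta> (a *\<^sub>R A + b *\<^sub>R B) = a * \<zeta> A + b * \<zeta> B))"

definition ubracket :: "complex^'n^'n \<Rightarrow> complex^'n^'n \<Rightarrow> complex^'n^'n" where
  "ubracket X Y = X ** Y - Y ** X"

end

theory Submission
  imports Defs
begin

text \<open>Write \<open>P\<^sub>x = iproj x = \<i> x x\<^sup>*/|x|\<^sup>2\<close> and \<open>h v = \<zeta> (v, P\<^sub>v)\<close>.
  For \<open>a \<bottom> b\<close> with \<open>|a| = |b|\<close> the pairs \<open>(a, P\<^sub>a)\<close>, \<open>(b, P\<^sub>b)\<close> commute, and
  \<open>P\<^sub>a + P\<^sub>b = P\<^sub>a\<^sub>+\<^sub>b + P\<^sub>a\<^sub>-\<^sub>b\<close> where \<open>(a + b, P\<^sub>a\<^sub>+\<^sub>b)\<close> commutes with \<open>(0, P\<^sub>a\<^sub>-\<^sub>b)\<close>;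
  normalization then gives \<open>h (a + b) = h a + h b\<close>. Since \<open>n \<ge> 2\<close> every \<open>a\<close> has such a
  partner \<open>b\<close>, whence \<open>h (2a) = 2 h a + h b + h (-b)\<close>. These doubling identities force
  \<open>h (2\<^sup>k a) - h (-2\<^sup>k a)\<close> to grow like \<open>2\<^sup>k\<close> and \<open>h (2\<^sup>k a) + h (2\<^sup>k b)\<close> like \<open>4\<^sup>k\<close>, whereas
  \<open>h (2\<^sup>k a) = 2\<^sup>k \<zeta> (a, 2\<^sup>-\<^sup>k P\<^sub>a) = o(2\<^sup>k)\<close> by continuity at \<open>(a, 0)\<close>; so \<open>h = 0\<close>, and
  by homogeneity \<open>\<zeta>\<close> vanishes on all \<open>(c x, \<mu> P\<^sub>x)\<close>. An eigenvector \<open>u\<close> of \<open>X\<close>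
  splits \<open>(v, X)\<close> into the commuting summands \<open>(c u, \<mu> P\<^sub>u)\<close> and \<open>(v - c u, X - \<mu> P\<^sub>u)\<close>,
  the second with a larger kernel, so \<open>\<zeta> = 0\<close> by induction. For a general quasi-state,
  \<open>\<zeta> (v, X) - \<zeta> (v, 0) - \<zeta> (0, X)\<close> is a continuous normalized one.\<close>

lemma matrix_vector_mult_scaleR_right:
  fixes A :: "'a::real_algebra_1^'n^'m"
  shows "A *v (c *\<^sub>R x) = c *\<^sub>R (A *v x)"
  using linear_scale[OF matrix_vector_mul_linear] .

lemma scaleR_matrix_vector_mult:
  fixes A :: "'a::real_algebra_1^'n^'m"
  shows "(c *\<^sub>R A) *v x = c *\<^sub>R (A *v x)"
  by (simp add: matrix_vector_mult_def vec_eq_iff scaleR_sum_right)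

lemma matrix_vector_mult_smult:
  fixes A :: "'a::comm_semiring_1^'n^'m"
  shows "A *v (c *s x) = c *s (A *v x)"
  by (simp add: matrix_vector_mult_def vec_eq_iff sum_distrib_left mult_ac)

lemma scaleR_eq_of_real_smult:
  fixes x :: "'a::real_algebra_1^'n"
  shows "r *\<^sub>R x = of_real r *s x"
  unfolding vec_eq_iff vector_scaleR_component by (simp add: scaleR_conv_of_real)

lemma uminus_matrix_vector_mult:
  fixes A :: "'a::ring_1^'n^'m"
  shows "(- A) *v x = - (A *v x)"
  by (simp add: matrix_vector_mult_def vec_eq_iff sum_negf)

section \<open>The Hermitian inner product\<close>

definition cinner :: "complex^'n \<Rightarrow> complex^'n \<Rightarrow> complex" where
  "cinner x y = (\<Sum>k\<in>UNIV. cnj (x$k) * y$k)"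

lemma cinner_self: "cinner x x = complex_of_real ((norm x)\<^sup>2)"
proof -
  have "(norm x)\<^sup>2 = (\<Sum>k\<in>UNIV. (cmod (x$k))\<^sup>2)"
    unfolding norm_vec_def L2_set_def by (simp add: sum_nonneg)
  moreover have "x$k * cnj (x$k) = complex_of_real ((cmod (x$k))\<^sup>2)" for k
    using complex_norm_square by (metis of_real_power)
  ultimately show ?thesis
    unfolding cinner_def by (simp add: mult.commute)
qed

lemma cinner_self_eq_0 [simp]: "cinner x x = 0 \<longleftrightarrow> x = 0"
  by (simp add: cinner_self)

lemma cinner_commute: "cinner y x = cnj (cinner x y)"
  unfolding cinner_def by (simp add: mult.commute)

lemma cinner_eq_0_sym: "cinner x y = 0 \<longleftrightarrow> cinner y x = 0"
  by (metis cinner_commute complex_cnj_zero_iff)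

lemma cinner_zero_right [simp]: "cinner x 0 = 0"
  unfolding cinner_def by simp

lemma cinner_add_left: "cinner (x + y) z = cinner x z + cinner y z"
  and cinner_add_right: "cinner x (y + z) = cinner x y + cinner x z"
  and cinner_diff_left: "cinner (x - y) z = cinner x z - cinner y z"
  and cinner_diff_right: "cinner x (y - z) = cinner x y - cinner x z"
  and cinner_minus_left: "cinner (- x) y = - cinner x y"
  and cinner_minus_right: "cinner x (- y) = - cinner x y"
  and cinner_smult_left: "cinner (c *s x) y = cnj c * cinner x y"
  and cinner_smult_right: "cinner x (c *s y) = c * cinner x y"
  unfolding cinner_def
  by (simp_all add: algebra_simps sum.distrib sum_subtractf sum_negf sum_distrib_left)

lemma cinner_scaleR_left: "cinner (r *\<^sub>R x) y = of_real r * cinner x y"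
  and cinner_scaleR_right: "cinner x (r *\<^sub>R y) = of_real r * cinner x y"
  unfolding cinner_def vector_scaleR_component
  by (simp_all add: scaleR_conv_of_real sum_distrib_left algebra_simps)

lemmas cinner_simps = cinner_add_left cinner_add_right cinner_diff_left cinner_diff_right
  cinner_minus_left cinner_minus_right cinner_smult_left cinner_smult_right
  cinner_scaleR_left cinner_scaleR_right

lemma norm_add_scaleR_power2:
  "(norm (u + t *\<^sub>R w))\<^sup>2 = (norm u)\<^sup>2 + 2 * t * Re (cinner w u) + t\<^sup>2 * (norm w)\<^sup>2"
proof -
  have "of_real ((norm (u + t *\<^sub>R w))\<^sup>2) = cinner (u + t *\<^sub>R w) (u + t *\<^sub>R w)"
    by (simp add: cinner_self)
  also have "\<dots> = cinner u u + of_real t * (cinner u w + cinner w u) + of_real (t\<^sup>2) * cinner w w"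
    by (simp add: cinner_simps algebra_simps power2_eq_square)
  also have "cinner u w + cinner w u = of_real (2 * Re (cinner w u))"
    using cinner_commute[of u w] by (simp add: complex_eq_iff)
  finally have "complex_of_real ((norm (u + t *\<^sub>R w))\<^sup>2)
      = of_real ((norm u)\<^sup>2 + 2 * t * Re (cinner w u) + t\<^sup>2 * (norm w)\<^sup>2)"
    by (simp add: cinner_self)
  then show ?thesis
    by (simp only: of_real_eq_iff)
qed

lemma exists_orthogonal_nonzero:
  assumes "CARD('n::finite) \<ge> 2"
  obtains b :: "complex^'n" where "b \<noteq> 0" "cinner a b = 0"
proof -
  obtain i j :: 'n where ij: "i \<noteq> j"
    using assms card_le_Suc0_iff_eq[of "UNIV :: 'n set"] by fastforce
  have axis: "cinner a (axis k c) = cnj (a$k) * c" for k c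
    unfolding cinner_def axis_def by (simp add: if_distrib cong: if_cong)
  show ?thesis
  proof (cases "a$i = 0 \<and> a$j = 0")
    case True
    with axis show ?thesis
      by (intro that[of "axis i 1"]) (auto simp: axis_def vec_eq_iff)
  next
    case False
    define b :: "complex^'n" where
      "b = axis i (- cnj (a$j)) + axis j (cnj (a$i))"
    have "cinner a b = 0"
      unfolding b_def by (simp add: cinner_add_right axis)
    moreover have "b \<noteq> 0"
      using False ij by (auto simp: b_def vec_eq_iff axis_def)
    ultimately show ?thesis
      using that by blast
  qed
qed

lemma exists_orthogonal_same_norm:
  assumes "CARD('n::finite) \<ge> 2"
  obtains b :: "complex^'n" where "cinner a b = 0" "cinner b b = cinner a a"
proof -
  obtain b0 where b0: "b0 \<noteq> 0" "cinner a b0 = 0"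
    using exists_orthogonal_nonzero[OF assms] by blast
  let ?b = "(norm a / norm b0) *\<^sub>R b0"
  have "cinner a ?b = 0" "cinner ?b ?b = cinner a a"
    using b0 by (simp_all add: cinner_simps cinner_self power2_eq_square)
  then show ?thesis
    using that by blast
qed

section \<open>Skew-Hermitian matrices and their eigenvectors\<close>

lemma un_iff: "X \<in> un \<longleftrightarrow> (\<forall>i j. X$i$j = - cnj (X$j$i))"
  by (simp add: un_def)

lemma subspace_un: "subspace (un :: (complex^'n^'n) set)"
  unfolding subspace_def
proof (intro conjI ballI allI)
  show "0 \<in> un"
    by (simp add: un_iff)
next
  fix X Y :: "complex^'n^'n" assume "X \<in> un" "Y \<in> un"
  show "X + Y \<in> un"
  proof (unfold un_iff, intro allI)
    fix i j
    have "X$i$j = - cnj (X$j$i)" "Y$i$j = - cnj (Y$j$i)"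
      using \<open>X \<in> un\<close> \<open>Y \<in> un\<close> unfolding un_iff by blast+
    then show "(X + Y)$i$j = - cnj ((X + Y)$j$i)"
      by simp
  qed
next
  fix c :: real and X :: "complex^'n^'n" assume "X \<in> un"
  show "c *\<^sub>R X \<in> un"
  proof (unfold un_iff, intro allI)
    fix i j
    have "X$i$j = - cnj (X$j$i)"
      using \<open>X \<in> un\<close> unfolding un_iff by blast
    then show "(c *\<^sub>R X)$i$j = - cnj ((c *\<^sub>R X)$j$i)"
      unfolding vector_scaleR_component by (simp add: scaleR_conv_of_real)
  qed
qed

lemma cnj_un_entry: "X \<in> un \<Longrightarrow> cnj (X$i$j) = - X$j$i"
  unfolding un_iff by (metis complex_cnj_cnj complex_cnj_minus)

lemmas un_zero = subspace_0[OF subspace_un]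
  and un_diff = subspace_diff[OF subspace_un]
  and un_uminus = subspace_neg[OF subspace_un]
  and un_scaleR = subspace_mul[OF subspace_un]

lemma cinner_un_left:
  assumes "X \<in> un"
  shows "cinner (X *v x) y = - cinner x (X *v y)"
proof -
  have "cinner (X *v x) y = (\<Sum>k\<in>UNIV. \<Sum>j\<in>UNIV. cnj (X$k$j) * cnj (x$j) * y$k)"
    unfolding cinner_def matrix_vector_mult_def by (simp add: sum_distrib_right)
  also have "\<dots> = (\<Sum>j\<in>UNIV. \<Sum>k\<in>UNIV. cnj (X$k$j) * cnj (x$j) * y$k)"
    by (rule sum.swap)
  also have "\<dots> = - cinner x (X *v y)"
    unfolding cinner_def matrix_vector_mult_def
    by (simp add: sum_distrib_left sum_negf[symmetric] cnj_un_entry[OF assms] algebra_simps)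
  finally show ?thesis .
qed

definition skew_form :: "complex^'n^'n \<Rightarrow> complex^'n \<Rightarrow> real" where
  "skew_form X u = Im (cinner u (X *v u))"

lemma skew_form_add_scaleR:
  assumes "X \<in> un"
  shows "skew_form X (u + t *\<^sub>R w) = skew_form X u + 2 * t * Im (cinner w (X *v u)) + t\<^sup>2 * skew_form X w"
proof -
  have "Im (cinner u (X *v w)) = Im (cinner w (X *v u))"
    using cinner_un_left[OF assms, of u w] cinner_commute[of w "X *v u"] by simp
  moreover have "cinner (u + t *\<^sub>R w) (X *v (u + t *\<^sub>R w)) = cinner u (X *v u)
      + of_real t * cinner u (X *v w) + of_real t * cinner w (X *v u) + of_real (t\<^sup>2) * cinner w (X *v w)"
    by (simp add: matrix_vector_right_distrib matrix_vector_mult_scaleR_right cinner_simps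
        algebra_simps power2_eq_square)
  ultimately show ?thesis
    unfolding skew_form_def by (simp add: power2_eq_square)
qed

lemma skew_form_scaleR: "skew_form X (c *\<^sub>R u) = c\<^sup>2 * skew_form X u"
  unfolding skew_form_def by (simp add: matrix_vector_mult_scaleR_right cinner_simps power2_eq_square)

lemma continuous_on_skew_form: "continuous_on S (skew_form X)"
  unfolding skew_form_def cinner_def by (intro continuous_intros)

lemma linear_coeff_eq_0_if_quadratic_nonpos:
  fixes a b :: real
  assumes "\<And>t. 2 * t * a + t\<^sup>2 * b \<le> 0"
  shows "a = 0"
proof (rule ccontr)
  assume "a \<noteq> 0"
  define c where "c = \<bar>b\<bar> + 1"
  have "c > 0" "2 * c + b > 0"
    unfolding c_def by (simp_all add: abs_if)
  moreover have "2 * (a / c) * a + (a / c)\<^sup>2 * b = a\<^sup>2 / c\<^sup>2 * (2 * c + b)"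
    using \<open>c > 0\<close> by (simp add: field_simps power2_eq_square)
  ultimately have "2 * (a / c) * a + (a / c)\<^sup>2 * b > 0"
    using \<open>a \<noteq> 0\<close> by simp
  with assms[of "a / c"] show False
    by simp
qed

text \<open>The function \<open>skew_form X - \<mu> |\<cdot>|\<^sup>2 \<le> 0\<close> vanishes at \<open>u\<close>, so its first variation
  at \<open>u\<close> vanishes in every direction \<open>w\<close>.\<close>
lemma skew_form_maximiser_eigenvector:
  assumes X: "X \<in> un"
    and bound: "\<And>y. skew_form X y \<le> \<mu> * (norm y)\<^sup>2"
    and attained: "skew_form X u = \<mu> * (norm u)\<^sup>2"
  shows "X *v u = (\<i> * of_real \<mu>) *s u"
proof -
  define d where "d = X *v u - (\<i> * of_real \<mu>) *s u"
  have "Im (cinner w d) = 0" for w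
  proof -
    have "2 * t * (Im (cinner w (X *v u)) - \<mu> * Re (cinner w u))
        + t\<^sup>2 * (skew_form X w - \<mu> * (norm w)\<^sup>2) \<le> 0" for t
      using bound[of "u + t *\<^sub>R w"] attained
      unfolding skew_form_add_scaleR[OF X] norm_add_scaleR_power2
      by (simp add: algebra_simps)
    then have "Im (cinner w (X *v u)) - \<mu> * Re (cinner w u) = 0"
      by (rule linear_coeff_eq_0_if_quadratic_nonpos)
    then show ?thesis
      unfolding d_def by (simp add: cinner_simps)
  qed
  from this[of "\<i> *s d"] have "d = 0"
    by (simp add: cinner_simps cinner_self)
  then show ?thesis
    unfolding d_def by simp
qed

lemma skew_form_max_eigenvector:
  assumes X: "X \<in> un"
  obtains u \<mu> where "u \<noteq> 0" "X *v u = (\<i> * of_real \<mu>) *s u" "\<And>y. skew_form X y \<le> \<mu> * (norm y)\<^sup>2"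
proof -
  obtain u where u: "u \<in> sphere 0 1" and max: "\<And>y. y \<in> sphere 0 1 \<Longrightarrow> skew_form X y \<le> skew_form X u"
    using continuous_attains_sup[OF compact_sphere _ continuous_on_skew_form, of 0 1 X] by auto
  define \<mu> where "\<mu> = skew_form X u"
  have bound: "skew_form X y \<le> \<mu> * (norm y)\<^sup>2" for y
  proof (cases "y = 0")
    case True
    then show ?thesis
      by (simp add: skew_form_def)
  next
    case False
    then have "skew_form X ((1 / norm y) *\<^sub>R y) \<le> \<mu>"
      unfolding \<mu>_def by (intro max) simp
    with False show ?thesis
      by (simp add: skew_form_scaleR field_simps power2_eq_square)
  qed
  moreover have "u \<noteq> 0" "skew_form X u = \<mu> * (norm u)\<^sup>2"
    using u by (auto simp: \<mu>_def)
  ultimately show ?thesis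
    using that skew_form_maximiser_eigenvector[OF X] by blast
qed

lemma skew_form_eq_0_imp_zero:
  assumes X: "X \<in> un" and zero: "\<And>y. skew_form X y = 0"
  shows "X = 0"
proof -
  have "X *v y = 0" for y
  proof -
    have "Im (cinner w (X *v y)) = 0" for w
      using skew_form_add_scaleR[OF X, of y 1 w] zero by simp
    from this[of "\<i> *s (X *v y)"] show ?thesis
      by (simp add: cinner_simps cinner_self)
  qed
  then show ?thesis
    by (metis matrix_vector_mult_0 matrix_eq)
qed

lemma un_nonzero_eigenvector:
  assumes X: "X \<in> un" and "X \<noteq> 0"
  obtains u \<mu> where "u \<noteq> 0" "\<mu> \<noteq> 0" "X *v u = (\<i> * of_real \<mu>) *s u"
proof -
  obtain u1 \<mu>1 where 1: "u1 \<noteq> 0" "X *v u1 = (\<i> * of_real \<mu>1) *s u1"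
    and bound1: "\<And>y. skew_form X y \<le> \<mu>1 * (norm y)\<^sup>2"
    using skew_form_max_eigenvector[OF X] by blast
  obtain u2 \<mu>2 where 2: "u2 \<noteq> 0" "(- X) *v u2 = (\<i> * of_real \<mu>2) *s u2"
    and bound2: "\<And>y. skew_form (- X) y \<le> \<mu>2 * (norm y)\<^sup>2"
    using skew_form_max_eigenvector[OF un_uminus[OF X]] by blast
  have "X *v u2 = - ((- X) *v u2)"
    by (simp add: uminus_matrix_vector_mult)
  also have "\<dots> = (\<i> * of_real (- \<mu>2)) *s u2"
    unfolding 2(2) by (simp add: vec_eq_iff)
  finally have "X *v u2 = (\<i> * of_real (- \<mu>2)) *s u2" .
  consider "\<mu>1 \<noteq> 0" | "\<mu>2 \<noteq> 0" | "\<mu>1 = 0" "\<mu>2 = 0"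
    by blast
  then show ?thesis
  proof cases
    case 1
    with \<open>u1 \<noteq> 0\<close> \<open>X *v u1 = _\<close> that show ?thesis by blast
  next
    case 2
    with \<open>u2 \<noteq> 0\<close> \<open>X *v u2 = (\<i> * of_real (- \<mu>2)) *s u2\<close> that show ?thesis
      by (metis neg_equal_0_iff_equal)
  next
    case 3
    have "skew_form (- X) y = - skew_form X y" for y
      unfolding skew_form_def by (simp add: cinner_simps uminus_matrix_vector_mult)
    then have "skew_form X y = 0" for y
      using bound1[of y] bound2[of y] 3 by simp
    with skew_form_eq_0_imp_zero[OF X] \<open>X \<noteq> 0\<close> show ?thesis
      by blast
  qed
qed

section \<open>Rank-one skew-Hermitian projections\<close>

text \<open>\<open>iproj x\<close> is \<open>\<i>\<close> times the orthogonal projection onto \<open>\<complex> x\<close>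
  (and \<open>0\<close> for \<open>x = 0\<close>).\<close>

definition iproj :: "complex^'n \<Rightarrow> complex^'n^'n" where
  "iproj x = (\<chi> i j. \<i> * (x$i * cnj (x$j)) / cinner x x)"

lemma iproj_mult_vector: "iproj x *v y = (\<i> * cinner x y / cinner x x) *s x"
  unfolding iproj_def matrix_vector_mult_def cinner_def
  by (simp add: vec_eq_iff sum_divide_distrib sum_distrib_left algebra_simps)

lemma iproj_mult_orthogonal: "cinner x y = 0 \<Longrightarrow> iproj x *v y = 0"
  by (simp add: iproj_mult_vector)

lemma iproj_mult_self: "x \<noteq> 0 \<Longrightarrow> iproj x *v x = \<i> *s x"
  by (simp add: iproj_mult_vector)

lemma iproj_in_un: "iproj x \<in> un"
  unfolding un_iff iproj_def by (simp add: cinner_self mult.commute)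

lemma iproj_mult_iproj_orthogonal:
  assumes "cinner x y = 0"
  shows "iproj x ** iproj y = 0"
proof -
  have "(iproj x ** iproj y)$i$j = - (x$i * cnj (y$j)) / (cinner x x * cinner y y) * cinner x y"
    for i j
    unfolding iproj_def matrix_matrix_mult_def cinner_def
    by (simp add: sum_distrib_left sum_divide_distrib algebra_simps sum_negf)
  with assms show ?thesis
    by (simp add: vec_eq_iff)
qed

lemma iproj_smult: "c \<noteq> 0 \<Longrightarrow> iproj (c *s x) = iproj x"
  unfolding iproj_def by (simp add: vec_eq_iff cinner_simps field_simps)

lemma iproj_scaleR: "r \<noteq> 0 \<Longrightarrow> iproj (r *\<^sub>R x) = iproj x"
  by (simp add: scaleR_eq_of_real_smult iproj_smult)

lemma iproj_add_iproj:
  assumes orth: "cinner a b = 0" and same_norm: "cinner a a = cinner b b"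
  shows "iproj a + iproj b = iproj (a + b) + iproj (a - b)"
proof (cases "a = 0")
  case True
  with same_norm show ?thesis
    by (simp add: iproj_def)
next
  case False
  have "cinner b a = 0"
    using orth cinner_eq_0_sym by blast
  then have ab: "cinner (a + b) (a + b) = 2 * cinner a a" "cinner (a - b) (a - b) = 2 * cinner a a"
    using orth same_norm by (simp_all add: cinner_simps)
  have parallelogram: "(a$i + b$i) * cnj (a$j + b$j) + (a$i - b$i) * cnj (a$j - b$j)
      = 2 * (a$i * cnj (a$j) + b$i * cnj (b$j))" for i j
    by (simp add: algebra_simps)
  have "\<i> * (a$i * cnj (a$j)) / cinner a a + \<i> * (b$i * cnj (b$j)) / cinner a a
      = \<i> * ((a$i + b$i) * cnj (a$j + b$j)) / (2 * cinner a a)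
        + \<i> * ((a$i - b$i) * cnj (a$j - b$j)) / (2 * cinner a a)" for i j
  proof -
    have "\<i> * ((a$i + b$i) * cnj (a$j + b$j)) / (2 * cinner a a)
          + \<i> * ((a$i - b$i) * cnj (a$j - b$j)) / (2 * cinner a a)
        = \<i> * ((a$i + b$i) * cnj (a$j + b$j) + (a$i - b$i) * cnj (a$j - b$j))
          / (2 * cinner a a)"
      by (simp add: add_divide_distrib distrib_left)
    also have "\<dots> = \<i> * (a$i * cnj (a$j)) / cinner a a + \<i> * (b$i * cnj (b$j)) / cinner a a"
      unfolding parallelogram using False by (simp add: field_simps)
    finally show ?thesis ..
  qed
  then show ?thesis
    unfolding iproj_def ab using same_norm by (simp add: vec_eq_iff)
qed

lemma iproj_mult_kernel_left:
  assumes "X \<in> un" "X *v u = 0"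
  shows "iproj u ** X = 0"
proof -
  have "(\<Sum>k\<in>UNIV. cnj (u$k) * X$k$j) = - cnj ((X *v u)$j)" for j
    unfolding matrix_vector_mult_def
    by (simp add: sum_negf[symmetric] mult.commute cnj_un_entry[OF assms(1)])
  moreover have "(iproj u ** X)$i$j = (\<i> * u$i / cinner u u) * (\<Sum>k\<in>UNIV. cnj (u$k) * X$k$j)"
    for i j
    unfolding iproj_def matrix_matrix_mult_def by (simp add: sum_distrib_left algebra_simps)
  ultimately show ?thesis
    using assms(2) by (simp add: vec_eq_iff)
qed

lemma iproj_mult_kernel_right:
  assumes "(X::complex^'n^'n) *v u = 0"
  shows "X ** iproj u = 0"
proof -
  have "(X ** iproj u)$i$j = (\<i> * cnj (u$j) / cinner u u) * (X *v u)$i" for i j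
    unfolding iproj_def matrix_matrix_mult_def matrix_vector_mult_def
    by (simp add: sum_distrib_left algebra_simps)
  with assms show ?thesis
    by (simp add: vec_eq_iff)
qed

lemma dim_kernel_psubset:
  fixes X Y :: "complex^'n^'n"
  assumes "{v. X *v v = 0} \<subset> {v. Y *v v = 0}"
  shows "DIM(complex^'n) - dim {v. Y *v v = 0} < DIM(complex^'n) - dim {v. X *v v = 0}"
proof -
  have span_kernel: "span {v. Z *v v = 0} = {v. Z *v v = 0}" for Z :: "complex^'n^'n"
    by (simp add: span_eq_iff linear_subspace_kernel)
  have "dim {v. X *v v = 0} < dim {v. Y *v v = 0}"
    using assms by (intro dim_psubset) (simp add: span_kernel)
  moreover have "dim {v. Y *v v = 0} \<le> DIM(complex^'n)"
    by (rule eucl.dim_subset_UNIV)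
  ultimately show ?thesis
    by linarith
qed

lemma un_deflation:
  assumes X: "X \<in> un" and "u \<noteq> 0" "\<mu> \<noteq> 0" and eigen: "X *v u = (\<i> * of_real \<mu>) *s u"
  defines "Y \<equiv> X - \<mu> *\<^sub>R iproj u"
  shows "Y \<in> un" "Y *v u = 0" "{w. X *v w = 0} \<subset> {w. Y *v w = 0}"
proof -
  show "Y \<in> un"
    unfolding Y_def using X by (simp add: un_diff un_scaleR iproj_in_un)
  have "Y *v u = (\<i> * of_real \<mu>) *s u - \<mu> *\<^sub>R (\<i> *s u)"
    unfolding Y_def using \<open>u \<noteq> 0\<close> eigen
    by (simp add: matrix_vector_mult_diff_rdistrib scaleR_matrix_vector_mult iproj_mult_self)
  also have "\<dots> = 0"
    by (simp add: scaleR_eq_of_real_smult vec_eq_iff)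
  finally show Yu: "Y *v u = 0" .
  have "cinner u w = 0" if "X *v w = 0" for w
  proof -
    have "- (cnj (\<i> * of_real \<mu>)) * cinner u w = - cinner (X *v u) w"
      unfolding eigen by (simp add: cinner_simps)
    also have "\<dots> = 0"
      using cinner_un_left[OF X, of u w] that by simp
    finally show ?thesis
      using \<open>\<mu> \<noteq> 0\<close> by simp
  qed
  then have "{w. X *v w = 0} \<subseteq> {w. Y *v w = 0}"
    unfolding Y_def
    by (auto simp: matrix_vector_mult_diff_rdistrib scaleR_matrix_vector_mult iproj_mult_orthogonal)
  moreover have "X *v u \<noteq> 0"
    using eigen \<open>u \<noteq> 0\<close> \<open>\<mu> \<noteq> 0\<close> by (auto simp: vec_eq_iff)
  ultimately show "{w. X *v w = 0} \<subset> {w. Y *v w = 0}"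
    using Yu by blast
qed

section \<open>Normalized quasi-states vanish\<close>

lemma gn_iff [simp]: "(v, X) \<in> gn \<longleftrightarrow> X \<in> un"
  by (simp add: gn_def)

lemma gbracket_self: "gbracket A A = 0"
  by (simp add: gbracket_def zero_prod_def)

lemma gbracket_iproj:
  assumes "cinner x y = 0" "cinner x t = 0" "cinner y s = 0"
  shows "gbracket (s, iproj x) (t, iproj y) = 0"
  using assms cinner_eq_0_sym[of x y]
  by (simp add: gbracket_def iproj_mult_orthogonal iproj_mult_iproj_orthogonal zero_prod_def)

lemma gbracket_iproj_kernel:
  assumes "Y \<in> un" "Y *v u = 0" "cinner u w = 0"
  shows "gbracket (c *s u, \<mu> *\<^sub>R iproj u) (w, Y) = 0"
  using assms iproj_mult_kernel_left[OF assms(1,2)] iproj_mult_kernel_right[OF assms(2)]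
  by (simp add: gbracket_def scaleR_matrix_vector_mult matrix_vector_mult_smult
      iproj_mult_orthogonal matrix_scalar_ac scalar_matrix_assoc[symmetric] zero_prod_def)

lemma eq_0_if_geometric_sublinear:
  fixes x c :: real
  assumes "c \<ge> 2" and lim: "(\<lambda>k. c ^ k * x / 2 ^ k) \<longlonglongrightarrow> 0"
  shows "x = 0"
proof -
  have bound: "\<bar>x\<bar> \<le> \<bar>c ^ k * x / 2 ^ k\<bar>" for k :: nat
  proof -
    have "2 ^ k * \<bar>x\<bar> \<le> c ^ k * \<bar>x\<bar>"
      using power_mono[OF assms(1), of k] by (simp add: mult_right_mono)
    then show ?thesis
      using assms(1) by (simp add: abs_mult field_simps)
  qed
  have "(\<lambda>k. \<bar>c ^ k * x / 2 ^ k\<bar>) \<longlonglongrightarrow> 0"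
    using tendsto_rabs[OF lim] by simp
  then have "\<bar>x\<bar> \<le> 0"
    by (rule LIMSEQ_le_const) (use bound in blast)
  then show ?thesis
    by simp
qed

locale normalized_quasi_state =
  fixes \<zeta> :: "(complex^'n) \<times> (complex^'n^'n) \<Rightarrow> real"
  assumes continuous: "continuous_on gn \<zeta>"
    and quasi_state: "lie_quasi_state gn gbracket \<zeta>"
    and translation_zero: "\<And>v. \<zeta> (v, 0) = 0"
    and rotation_zero: "\<And>X. X \<in> un \<Longrightarrow> \<zeta> (0, X) = 0"
begin

lemma add_commuting: "A \<in> gn \<Longrightarrow> B \<in> gn \<Longrightarrow> gbracket A B = 0 \<Longrightarrow> \<zeta> (A + B) = \<zeta> A + \<zeta> B"
  using quasi_state unfolding lie_quasi_state_def by (metis mult_1 scaleR_one)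

lemma homogeneous: "A \<in> gn \<Longrightarrow> \<zeta> (c *\<^sub>R A) = c * \<zeta> A"
  using quasi_state gbracket_self[of A] unfolding lie_quasi_state_def
  by (metis add.right_neutral mult_zero_left scaleR_zero_left)

definition line_value :: "complex^'n \<Rightarrow> real" where
  "line_value v = \<zeta> (v, iproj v)"

lemma line_value_add_orthogonal:
  assumes orth: "cinner a b = 0" and same_norm: "cinner a a = cinner b b"
  shows "line_value (a + b) = line_value a + line_value b"
proof -
  have "cinner b a = 0"
    using orth cinner_eq_0_sym by blast
  then have orth': "cinner (a + b) (a - b) = 0" "cinner (a - b) (a + b) = 0"
    using orth same_norm by (simp_all add: cinner_simps)
  have "\<zeta> (a + b, iproj a + iproj b) = line_value a + line_value b"
    using add_commuting[of "(a, iproj a)" "(b, iproj b)"] gbracket_iproj[of a b b a]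
      orth \<open>cinner b a = 0\<close>
    by (simp add: line_value_def iproj_in_un)
  moreover have "\<zeta> (a + b, iproj (a + b) + iproj (a - b)) = line_value (a + b)"
    using add_commuting[of "(a + b, iproj (a + b))" "(0, iproj (a - b))"]
      gbracket_iproj[of "a + b" "a - b" 0 "a + b"] orth' rotation_zero[OF iproj_in_un]
    by (simp add: line_value_def iproj_in_un)
  ultimately show ?thesis
    using iproj_add_iproj[OF orth same_norm] by simp
qed

lemma line_value_double:
  assumes orth: "cinner a b = 0" and same_norm: "cinner a a = cinner b b"
  shows "line_value (2 *\<^sub>R a) = 2 * line_value a + line_value b + line_value (- b)"
proof -
  have "cinner b a = 0"
    using orth cinner_eq_0_sym by blast
  then have "cinner (a + b) (a - b) = 0" "cinner (a + b) (a + b) = cinner (a - b) (a - b)"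
    using orth same_norm by (simp_all add: cinner_simps)
  then have "line_value ((a + b) + (a - b)) = line_value (a + b) + line_value (a - b)"
    by (rule line_value_add_orthogonal)
  moreover have "(a + b) + (a - b) = 2 *\<^sub>R a"
    by (simp add: scaleR_2)
  moreover have "line_value (a + - b) = line_value a + line_value (- b)"
    using orth same_norm by (intro line_value_add_orthogonal) (simp_all add: cinner_simps)
  ultimately show ?thesis
    using line_value_add_orthogonal[OF orth same_norm] by simp
qed

lemma line_value_sublinear: "(\<lambda>k. line_value (2 ^ k *\<^sub>R a) / 2 ^ k) \<longlonglongrightarrow> 0"
proof -
  have "line_value (2 ^ k *\<^sub>R a) / 2 ^ k = \<zeta> (a, inverse (2 ^ k) *\<^sub>R iproj a)" for k :: nat
  proof -
    have "(2 ^ k *\<^sub>R a, iproj a) = (2::real) ^ k *\<^sub>R (a, inverse (2 ^ k) *\<^sub>R iproj a)"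
      by simp
    then show ?thesis
      using iproj_scaleR[of "2 ^ k" a] homogeneous[of "(a, inverse (2 ^ k) *\<^sub>R iproj a)" "2 ^ k"]
      by (simp add: line_value_def iproj_in_un un_scaleR)
  qed
  moreover have "(\<lambda>k. (a, inverse ((2::real) ^ k) *\<^sub>R iproj a)) \<longlonglongrightarrow> (a, 0)"
    using tendsto_Pair[OF tendsto_const
        tendsto_scaleR[OF LIMSEQ_inverse_realpow_zero[of 2] tendsto_const[of "iproj a"]]]
    by simp
  then have "(\<lambda>k. \<zeta> (a, inverse ((2::real) ^ k) *\<^sub>R iproj a)) \<longlonglongrightarrow> \<zeta> (a, 0)"
    by (rule continuous_on_tendsto_compose[OF continuous])
      (simp_all add: un_zero un_scaleR iproj_in_un)
  ultimately show ?thesis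
    by (simp add: translation_zero)
qed

end

locale normalized_quasi_state_card_ge_2 = normalized_quasi_state \<zeta>
  for \<zeta> :: "(complex^'n) \<times> (complex^'n^'n) \<Rightarrow> real" +
  assumes card_ge_2: "CARD('n) \<ge> 2"
begin

lemma line_value_double_odd_part:
  "line_value (2 *\<^sub>R a) - line_value (2 *\<^sub>R (- a)) = 2 * (line_value a - line_value (- a))"
proof -
  obtain b where ab: "cinner a b = 0" "cinner b b = cinner a a"
    using exists_orthogonal_same_norm[OF card_ge_2] by blast
  have "line_value (2 *\<^sub>R a) = 2 * line_value a + line_value b + line_value (- b)"
    using ab by (intro line_value_double) simp_all
  moreover have "line_value (2 *\<^sub>R (- a)) = 2 * line_value (- a) + line_value b + line_value (- b)"
    using ab by (intro line_value_double) (simp_all add: cinner_simps)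
  ultimately show ?thesis
    by simp
qed

lemma line_value_uminus: "line_value (- a) = line_value a"
proof -
  define d where "d k = line_value (2 ^ k *\<^sub>R a) - line_value (2 ^ k *\<^sub>R (- a))" for k :: nat
  have growth: "d k = 2 ^ k * (line_value a - line_value (- a))" for k
  proof (induction k)
    case (Suc k)
    have "d (Suc k) = 2 * d k"
      using line_value_double_odd_part[of "2 ^ k *\<^sub>R a"] by (simp add: d_def)
    with Suc show ?case
      by simp
  qed (simp add: d_def)
  have "(\<lambda>k. d k / 2 ^ k) \<longlonglongrightarrow> 0"
    using tendsto_diff[OF line_value_sublinear[of a] line_value_sublinear[of "- a"]]
    unfolding d_def diff_divide_distrib by simp
  then show ?thesis
    using eq_0_if_geometric_sublinear[of 2 "line_value a - line_value (- a)"]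
    unfolding growth by simp
qed

lemma line_value_double_pair:
  assumes orth: "cinner a b = 0" and same_norm: "cinner a a = cinner b b"
  shows "line_value (2 *\<^sub>R a) + line_value (2 *\<^sub>R b) = 4 * (line_value a + line_value b)"
proof -
  have "cinner b a = 0"
    using orth cinner_eq_0_sym by blast
  then show ?thesis
    using line_value_double[OF orth same_norm] line_value_double[of b a] same_norm
    by (simp add: line_value_uminus)
qed


lemma line_value_eq_0: "line_value v = 0"
proof -
  define a where "a = (1 / 2 :: real) *\<^sub>R v"
  obtain b where ab: "cinner a b = 0" "cinner b b = cinner a a"
    using exists_orthogonal_same_norm[OF card_ge_2] by blast
  define s where "s k = line_value (2 ^ k *\<^sub>R a) + line_value (2 ^ k *\<^sub>R b)" for k :: nat
  have growth: "s k = 4 ^ k * (line_value a + line_value b)" for k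
  proof (induction k)
    case (Suc k)
    have "cinner (2 ^ k *\<^sub>R a) (2 ^ k *\<^sub>R b) = 0"
      "cinner (2 ^ k *\<^sub>R a) (2 ^ k *\<^sub>R a) = cinner (2 ^ k *\<^sub>R b) (2 ^ k *\<^sub>R b)"
      using ab by (simp_all add: cinner_simps)
    from line_value_double_pair[OF this] Suc show ?case
      by (simp add: s_def)
  qed (simp add: s_def)
  have "(\<lambda>k. s k / 2 ^ k) \<longlonglongrightarrow> 0"
    unfolding s_def add_divide_distrib
    using tendsto_add[OF line_value_sublinear[of a] line_value_sublinear[of b]] by simp
  then have "line_value a + line_value b = 0"
    using eq_0_if_geometric_sublinear[of 4] unfolding growth by simp
  moreover have "line_value v = 2 * (line_value a + line_value b)"
    using line_value_double[of a b] ab by (simp add: a_def line_value_uminus)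
  ultimately show ?thesis
    by simp
qed

lemma vanishes_rank_one:
  assumes "x \<noteq> 0"
  shows "\<zeta> (c *s x, \<mu> *\<^sub>R iproj x) = 0"
proof (cases "\<mu> = 0 \<or> c = 0")
  case True
  then show ?thesis
    using translation_zero rotation_zero[OF un_scaleR[OF iproj_in_un]]
    by (auto simp: vec_eq_iff)
next
  case False
  define w where "w = (of_real (inverse \<mu>) * c) *s x"
  have "iproj w = iproj x"
    using False by (simp add: w_def iproj_smult)
  moreover have "\<mu> *\<^sub>R w = c *s x"
    using False by (simp add: w_def scaleR_eq_of_real_smult vector_smult_assoc)
  ultimately have "(c *s x, \<mu> *\<^sub>R iproj x) = \<mu> *\<^sub>R (w, iproj w)"
    by simp
  also have "\<zeta> \<dots> = \<mu> * line_value w"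
    unfolding line_value_def by (rule homogeneous) (simp add: iproj_in_un)
  finally show ?thesis
    by (simp add: line_value_eq_0)
qed


lemma vanishes: "X \<in> un \<Longrightarrow> \<zeta> (v, X) = 0"
proof (induction X arbitrary: v
    rule: measure_induct_rule[where f = "\<lambda>X. DIM(complex^'n) - dim {w. X *v w = 0}"])
  case (less X)
  show ?case
  proof (cases "X = 0")
    case True
    then show ?thesis
      by (simp add: translation_zero)
  next
    case False
    obtain u \<mu> where u: "u \<noteq> 0" "\<mu> \<noteq> 0" and eigen: "X *v u = (\<i> * of_real \<mu>) *s u"
      using un_nonzero_eigenvector[OF less.prems False] by blast
    define Y where "Y = X - \<mu> *\<^sub>R iproj u"
    note deflation = un_deflation[OF less.prems u eigen, folded Y_def]
    define c where "c = cinner u v / cinner u u"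
    have "cinner u (v - c *s u) = 0"
      using u by (simp add: c_def cinner_simps)
    then have "gbracket (c *s u, \<mu> *\<^sub>R iproj u) (v - c *s u, Y) = 0"
      by (rule gbracket_iproj_kernel[OF deflation(1,2)])
    then have "\<zeta> ((c *s u, \<mu> *\<^sub>R iproj u) + (v - c *s u, Y))
        = \<zeta> (c *s u, \<mu> *\<^sub>R iproj u) + \<zeta> (v - c *s u, Y)"
      by (intro add_commuting) (simp_all add: un_scaleR iproj_in_un deflation(1))
    moreover have "(c *s u, \<mu> *\<^sub>R iproj u) + (v - c *s u, Y) = (v, X)"
      by (simp add: Y_def)
    moreover have "\<zeta> (v - c *s u, Y) = 0"
      using less.IH[OF dim_kernel_psubset[OF deflation(3)] deflation(1)] .
    ultimately show ?thesis
      using vanishes_rank_one[OF u(1)] by simp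
  qed
qed

end

section \<open>Decomposition of quasi-states\<close>

context
  fixes \<zeta> :: "(complex^'n) \<times> (complex^'n^'n) \<Rightarrow> real"
  assumes quasi_state: "lie_quasi_state gn gbracket \<zeta>"
begin

lemma quasi_state_combination:
  "A \<in> gn \<Longrightarrow> B \<in> gn \<Longrightarrow> gbracket A B = 0 \<Longrightarrow> \<zeta> (a *\<^sub>R A + b *\<^sub>R B) = a * \<zeta> A + b * \<zeta> B"
  using quasi_state unfolding lie_quasi_state_def by blast

lemma quasi_state_zero: "\<zeta> (0, 0) = 0"
  using quasi_state_combination[of "(0, 0)" "(0, 0)" 0 0] gbracket_self[of "(0, 0)"]
  by (simp add: un_zero)

lemma linear_quasi_state_translation: "linear (\<lambda>v. \<zeta> (v, 0))"
proof (rule linearI)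
  fix v w :: "complex^'n"
  have "gbracket (v, 0) (w, 0) = 0"
    by (simp add: gbracket_def zero_prod_def)
  then show "\<zeta> (v + w, 0) = \<zeta> (v, 0) + \<zeta> (w, 0)"
    using quasi_state_combination[of "(v, 0)" "(w, 0)" 1 1] by (simp add: un_zero)
next
  fix c :: real and v :: "complex^'n"
  show "\<zeta> (c *\<^sub>R v, 0) = c *\<^sub>R \<zeta> (v, 0)"
    using quasi_state_combination[of "(v, 0)" "(v, 0)" c 0] gbracket_self[of "(v, 0)"]
    by (simp add: un_zero)
qed

lemma quasi_state_restrict_un: "lie_quasi_state un ubracket (\<lambda>X. \<zeta> (0, X))"
  unfolding lie_quasi_state_def
proof (intro ballI impI allI)
  fix X Y :: "complex^'n^'n" and a b :: real
  assume "X \<in> un" "Y \<in> un" "ubracket X Y = 0"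
  then show "\<zeta> (0, a *\<^sub>R X + b *\<^sub>R Y) = a * \<zeta> (0, X) + b * \<zeta> (0, Y)"
    using quasi_state_combination[of "(0, X)" "(0, Y)" a b]
    by (simp add: gbracket_def ubracket_def zero_prod_def)
qed

lemma quasi_state_remainder:
  "lie_quasi_state gn gbracket (\<lambda>A. \<zeta> A - \<zeta> (fst A, 0) - \<zeta> (0, snd A))"
  unfolding lie_quasi_state_def
proof (intro ballI impI allI)
  fix A B :: "(complex^'n) \<times> (complex^'n^'n)" and a b :: real
  assume AB: "A \<in> gn" "B \<in> gn" "gbracket A B = 0"
  obtain v X w Y where A: "A = (v, X)" and B: "B = (w, Y)"
    by fastforce
  have "ubracket X Y = 0"
    using AB(3) by (simp add: A B gbracket_def ubracket_def zero_prod_def)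
  then have "\<zeta> (0, a *\<^sub>R X + b *\<^sub>R Y) = a * \<zeta> (0, X) + b * \<zeta> (0, Y)"
    using quasi_state_restrict_un AB(1,2) unfolding lie_quasi_state_def A B by simp
  moreover have "\<zeta> (a *\<^sub>R v + b *\<^sub>R w, 0) = a * \<zeta> (v, 0) + b * \<zeta> (w, 0)"
    using linear_add[OF linear_quasi_state_translation] linear_scale[OF linear_quasi_state_translation]
    by simp
  ultimately show "\<zeta> (a *\<^sub>R A + b *\<^sub>R B) - \<zeta> (fst (a *\<^sub>R A + b *\<^sub>R B), 0) - \<zeta> (0, snd (a *\<^sub>R A + b *\<^sub>R B))
      = a * (\<zeta> A - \<zeta> (fst A, 0) - \<zeta> (0, snd A)) + b * (\<zeta> B - \<zeta> (fst B, 0) - \<zeta> (0, snd B))"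
    using quasi_state_combination[OF AB] by (simp add: A B algebra_simps)
qed

end

lemma continuous_on_quasi_state_rotation_part:
  fixes \<zeta> :: "(complex^'n) \<times> (complex^'n^'n) \<Rightarrow> real"
  assumes "continuous_on gn \<zeta>"
  shows "continuous_on un (\<lambda>X. \<zeta> (0, X))"
  by (rule continuous_on_compose2[OF assms continuous_on_Pair[OF continuous_on_const continuous_on_id]])
    auto

lemma continuous_on_quasi_state_remainder:
  fixes \<zeta> :: "(complex^'n) \<times> (complex^'n^'n) \<Rightarrow> real"
  assumes "continuous_on gn \<zeta>"
  shows "continuous_on gn (\<lambda>A. \<zeta> A - \<zeta> (fst A, 0) - \<zeta> (0, snd A))"
proof -
  have "continuous_on gn (\<lambda>A. \<zeta> (fst A, 0))"
    by (rule continuous_on_compose2[OF assms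
          continuous_on_Pair[OF continuous_on_fst[OF continuous_on_id] continuous_on_const]])
      (auto simp: un_zero)
  moreover have "continuous_on gn (\<lambda>A. \<zeta> (0, snd A))"
    by (rule continuous_on_compose2[OF assms
          continuous_on_Pair[OF continuous_on_const continuous_on_snd[OF continuous_on_id]]])
      (auto simp: gn_def)
  ultimately show ?thesis
    using assms by (intro continuous_on_diff)
qed

lemma normalized_quasi_state_vanishes:
  fixes \<zeta> :: "(complex^'n) \<times> (complex^'n^'n) \<Rightarrow> real"
  assumes "CARD('n) \<ge> 2" "continuous_on gn \<zeta>" "lie_quasi_state gn gbracket \<zeta>"
    "\<forall>v. \<zeta> (v, 0) = 0" "\<forall>X\<in>un. \<zeta> (0, X) = 0"
  shows "\<forall>A\<in>gn. \<zeta> A = 0"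
proof -
  interpret normalized_quasi_state_card_ge_2 \<zeta>
    using assms by unfold_locales auto
  show ?thesis
    unfolding gn_def using vanishes by auto
qed

lemma quasi_state_decomposition:
  fixes \<zeta> :: "(complex^'n) \<times> (complex^'n^'n) \<Rightarrow> real"
  assumes card: "CARD('n) \<ge> 2" and cont: "continuous_on gn \<zeta>"
    and qs: "lie_quasi_state gn gbracket \<zeta>"
  shows "\<exists>\<psi> \<eta>. linear \<psi> \<and> continuous_on un \<eta> \<and> lie_quasi_state un ubracket \<eta>
    \<and> (\<forall>v. \<forall>X\<in>un. \<zeta> (v, X) = \<psi> v + \<eta> X)"
proof (intro exI conjI)
  let ?\<psi> = "\<lambda>v. \<zeta> (v, 0)" and ?\<eta> = "\<lambda>X. \<zeta> (0, X)"
  show "linear ?\<psi>" and "lie_quasi_state un ubracket ?\<eta>"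
    using qs by (rule linear_quasi_state_translation, rule quasi_state_restrict_un)
  show "continuous_on un ?\<eta>"
    using cont by (rule continuous_on_quasi_state_rotation_part)
  have "\<forall>A\<in>gn. \<zeta> A - ?\<psi> (fst A) - ?\<eta> (snd A) = 0"
    using quasi_state_zero[OF qs]
    by (intro normalized_quasi_state_vanishes[OF card continuous_on_quasi_state_remainder[OF cont]
        quasi_state_remainder[OF qs]]) simp_all
  then show "\<forall>v. \<forall>X\<in>un. \<zeta> (v, X) = ?\<psi> v + ?\<eta> X"
  proof (intro allI ballI)
    fix v :: "complex^'n" and X :: "complex^'n^'n"
    assume "\<forall>A\<in>gn. \<zeta> A - ?\<psi> (fst A) - ?\<eta> (snd A) = 0" and "X \<in> un"
    then have "\<zeta> (v, X) - ?\<psi> v - ?\<eta> X = 0"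
      by (metis gn_iff fst_conv snd_conv)
    then show "\<zeta> (v, X) = ?\<psi> v + ?\<eta> X"
      by simp
  qed
qed

theorem mainTheorem17:
  assumes "CARD('n::finite) \<ge> 2"
  shows "(\<forall>\<zeta> :: (complex^'n) \<times> (complex^'n^'n) \<Rightarrow> real.
            continuous_on gn \<zeta> \<and> lie_quasi_state gn gbracket \<zeta>
            \<and> (\<forall>v. \<zeta> (v, 0) = 0) \<and> (\<forall>X\<in>un. \<zeta> (0, X) = 0)
            \<longrightarrow> (\<forall>A\<in>gn. \<zeta> A = 0))
       \<and> (\<forall>\<zeta> :: (complex^'n) \<times> (complex^'n^'n) \<Rightarrow> real.
            continuous_on gn \<zeta> \<and> lie_quasi_state gn gbracket \<zeta>
            \<longrightarrow> (\<exists>(\<psi> :: complex^'n \<Rightarrow> real) (\<eta> :: complex^'n^'n \<Rightarrow> real).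
                   linear \<psi> \<and> continuous_on un \<eta> \<and> lie_quasi_state un ubracket \<eta>
                   \<and> (\<forall>v. \<forall>X\<in>un. \<zeta> (v, X) = \<psi> v + \<eta> X)))"
  using normalized_quasi_state_vanishes[OF assms] quasi_state_decomposition[OF assms] by blast

end
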